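(* Let $u_n:\mathbb R^p\to\mathbb R^p$, $n\ge1$, be a sequence of random differentiable estimating functions and $\mathbf J_n(\boldsymbol\theta)=-\frac{d}{d\boldsymbol\theta^\top}u_n(\boldsymbol\theta)$. Assume there exist invertible symmetric matrices $\mathbf V_n$ and parameter values $\boldsymbol\theta^*_n\in\mathbb R^p$ such that: (G1) $\|\mathbf V_n^{-1}\|\to0$; (G2) there exists $l>0$ with $\mathbb P(l_n<l)\to0$, where $l_n=\inf_{\|\boldsymbol\phi\|=1}\boldsymbol\phi^\top\mathbf V_n^{-1}\mathbf J_n(\boldsymbol\theta^*_n)\mathbf V_n^{-1}\boldsymbol\phi$; (G3) for every $d>0$, $\gamma_{nd}:=\sup_{\|\mathbf V_n(\boldsymbol\theta-\boldsymbol\theta^*_n)\|\le d}\|\mathbf V_n^{-1}\{\mathbf J_n(\boldsymbol\theta)-\mathbf J_n(\boldsymbol\theta^*_n)\}\mathbf V_n^{-1}\|_M\to0$ in probability; (G4) $\mathbf V_n^{-1}u_n(\boldsymbol\theta^*_n)$ is bounded in probability, i.e. for every $\epsilon>0$ there is $d$ with $\mathbb P(\|\mathbf V_n^{-1}u_n(\boldsymbol\theta^*_n)\|>d)\le\epsilon$ for all sufficiently large $n$. Then for every $\epsilon>0$ there exists $d>0$ such that, for all sufficiently large $n$, \[ \mathbb P\big\{\exists\,\tilde{\boldsymbol\theta}_n:\ u_n(\tilde{\boldsymbol\theta}_n)=0\ \text{and}\ \|\mathbf V_n(\tilde{\boldsymbol\theta}_n-\boldsymbol\theta^*_n)\|<d\big\}>1-\epsilon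 . \]
   Context: For a matrix $\mathbf A=[a_{ij}]$, $\|\mathbf A\|_M=\max_{i,j}|a_{ij}|$; $\|\cdot\|$ denotes the Euclidean norm for vectors and the corresponding operator norm for matrices. The distribution of $u_n$ is governed by an underlying probability measure $\mathbb P$. *)

theory Defs
  imports "HOL-Analysis.Analysis" "HOL-Probability.Probability"
begin

definition maxnorm :: "real^'n^'m \<Rightarrow> real" where
  "maxnorm A = Max (range (\<lambda>(i,j). \<bar>A $ i $ j\<bar>))"

definition opnorm :: "real^'n^'m \<Rightarrow> real" where
  "opnorm A = onorm (\<lambda>x. A *v x)"

definition lmin :: "real^'p^'p \<Rightarrow> real^'p^'p \<Rightarrow> real" where
  "lmin V J = Inf ((\<lambda>\<phi>. \<phi> \<bullet> ((matrix_inv V ** J ** matrix_inv V) *v \<phi>)) ` {\<phi>. norm \<phi> = 1})"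

definition gam :: "real^'p^'p \<Rightarrow> (real^'p \<Rightarrow> real^'p^'p) \<Rightarrow> real^'p \<Rightarrow> real \<Rightarrow> ereal" where
  "gam V J \<theta>s d = (SUP \<theta>\<in>{\<theta>. norm (V *v (\<theta> - \<theta>s)) \<le> d}.
      ereal (maxnorm (matrix_inv V ** (J \<theta> - J \<theta>s) ** matrix_inv V)))"

end

theory Submission
  imports Defs
begin

text \<open>Standardize the parameter by \<open>\<phi> = V (\<theta> - \<theta>*)\<close> and consider
  \<open>g \<phi> = V\<^sup>-\<^sup>1 u(\<theta>* + V\<^sup>-\<^sup>1 \<phi>)\<close>, whose derivative is \<open>-V\<^sup>-\<^sup>1 J V\<^sup>-\<^sup>1\<close>.
  By the mean value theorem along the ray through \<open>\<phi>\<close>, on the sphere \<open>\<parallel>\<phi>\<parallel> = r\<close>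
  \<open>\<phi> \<bullet> g \<phi> \<le> r \<parallel>g 0\<parallel> - l r\<^sup>2 + \<gamma> r\<^sup>2\<close>, where \<open>l\<close> bounds the standardized information
  at \<open>\<theta>*\<close> from below (G2) and \<open>\<gamma>\<close> bounds its variation on the ball (G3). Once \<open>g 0\<close>
  is bounded (G4) and \<open>\<gamma> \<le> l/2\<close>, a large fixed \<open>r\<close> makes \<open>g\<close> point strictly inward
  on the sphere, and Brouwer's fixed point theorem yields a zero of \<open>g\<close> in the ball.
  Each of the three conditions fails only on an event of small probability.\<close>

lemma matrix_mul_matrix_inv:
  assumes "invertible (A::'a::semiring_1^'n^'n)"
  shows "A ** matrix_inv A = mat 1"
proof -
  have "\<exists>A'::'a^'n^'n. A ** A' = mat 1 \<and> A' ** A = mat 1"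
    using assms invertible_def by blast
  then have "A ** matrix_inv A = mat 1 \<and> matrix_inv A ** A = mat 1"
    unfolding matrix_inv_def by (rule someI_ex)
  then show ?thesis ..
qed

lemma matrix_vector_mul_matrix_inv:
  assumes "invertible (A::'a::semiring_1^'n^'n)"
  shows "A *v (matrix_inv A *v x) = x"
  by (simp add: matrix_vector_mul_assoc matrix_mul_matrix_inv[OF assms])

lemma inward_field_has_zero_in_cball:
  fixes g :: "'a::euclidean_space \<Rightarrow> 'a"
  assumes r: "r > 0" and cont: "continuous_on (cball 0 r) g"
    and inward: "\<And>\<phi>. norm \<phi> = r \<Longrightarrow> \<phi> \<bullet> g \<phi> < 0"
  obtains \<phi> where "\<phi> \<in> cball 0 r" "g \<phi> = 0"
proof (rule ccontr)
  assume "\<not> thesis"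
  with that have nz: "\<And>\<phi>. \<phi> \<in> cball 0 r \<Longrightarrow> g \<phi> \<noteq> 0" by blast
  \<comment> \<open>A fixed point of \<open>r g/\<parallel>g\<parallel>\<close> lies on the sphere, where \<open>g\<close> would point outward.\<close>
  define h where "h \<phi> = (r / norm (g \<phi>)) *\<^sub>R g \<phi>" for \<phi>
  have h_cont: "continuous_on (cball 0 r) h"
    unfolding h_def by (intro continuous_intros cont) (use nz in auto)
  have h_norm: "\<And>\<phi>. \<phi> \<in> cball 0 r \<Longrightarrow> norm (h \<phi>) = r"
    using nz r by (simp add: h_def)
  then have "h \<in> cball 0 r \<rightarrow> cball 0 r" by auto
  then obtain \<phi> where \<phi>: "\<phi> \<in> cball 0 r" "h \<phi> = \<phi>"
    using brouwer_ball[OF r h_cont] by blast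
  have "\<phi> \<bullet> g \<phi> = (r / norm (g \<phi>)) * (g \<phi> \<bullet> g \<phi>)"
    using \<phi>(2) by (metis h_def inner_scaleR_left)
  also have "\<dots> > 0" using nz[OF \<phi>(1)] r by simp
  finally show False
    using inward[of \<phi>] h_norm[OF \<phi>(1)] \<phi>(2) by simp
qed

lemma inner_radial_mean_value:
  fixes g :: "'a::real_inner \<Rightarrow> 'a"
  assumes der: "\<And>x. (g has_derivative g' x) (at x)"
  obtains \<xi> where "\<xi> \<in> {0<..<1}" "\<phi> \<bullet> g \<phi> - \<phi> \<bullet> g 0 = \<phi> \<bullet> g' (\<xi> *\<^sub>R \<phi>) \<phi>"
proof -
  have "((\<lambda>t. \<phi> \<bullet> g (t *\<^sub>R \<phi>)) has_derivative (\<lambda>s. \<phi> \<bullet> g' (t *\<^sub>R \<phi>) (s *\<^sub>R \<phi>)))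
      (at t within {0..1})" for t
  proof -
    have "((\<lambda>t::real. t *\<^sub>R \<phi>) has_derivative (\<lambda>s. s *\<^sub>R \<phi>)) (at t)"
      by (auto intro!: derivative_eq_intros)
    from has_derivative_compose[OF this der]
    have "((\<lambda>t. g (t *\<^sub>R \<phi>)) has_derivative (\<lambda>s. g' (t *\<^sub>R \<phi>) (s *\<^sub>R \<phi>))) (at t)"
      by (simp add: o_def)
    then show ?thesis
      by (rule has_derivative_at_withinI[OF bounded_linear.has_derivative[OF bounded_linear_inner_right]])
  qed
  from mvt_simple[of 0 1, OF _ this] that show ?thesis by auto
qed

lemma has_derivative_standardized:
  fixes U :: "real^'p \<Rightarrow> real^'p" and Jf :: "real^'p \<Rightarrow> real^'p^'p"
  assumes der: "\<And>\<theta>. (U has_derivative (\<lambda>h. - (Jf \<theta> *v h))) (at \<theta>)"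
  shows "((\<lambda>\<phi>. W *v U (\<theta>s + W *v \<phi>)) has_derivative
      (\<lambda>h. - ((W ** Jf (\<theta>s + W *v \<phi>) ** W) *v h))) (at \<phi>)"
proof -
  have "((\<lambda>\<phi>. \<theta>s + W *v \<phi>) has_derivative (\<lambda>h. W *v h)) (at \<phi>)"
    by (auto intro!: derivative_eq_intros
        bounded_linear.has_derivative[OF matrix_vector_mul_bounded_linear])
  from has_derivative_compose[OF this der]
  have "((\<lambda>\<phi>. U (\<theta>s + W *v \<phi>)) has_derivative (\<lambda>h. - (Jf (\<theta>s + W *v \<phi>) *v (W *v h)))) (at \<phi>)"
    by (simp add: o_def)
  from bounded_linear.has_derivative[OF matrix_vector_mul_bounded_linear this, of W]
  show ?thesis
    by (simp add: matrix_vector_mul_assoc matrix_mul_assoc linear_neg[OF matrix_vector_mul_linear])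
qed

lemma lmin_le_quadratic_form:
  fixes V J :: "real^'p^'p"
  assumes "norm \<phi> = 1"
  shows "lmin V J \<le> \<phi> \<bullet> ((matrix_inv V ** J ** matrix_inv V) *v \<phi>)"
proof -
  let ?q = "\<lambda>\<phi>::real^'p. \<phi> \<bullet> ((matrix_inv V ** J ** matrix_inv V) *v \<phi>)"
  have "continuous_on (sphere 0 1) ?q"
    by (intro continuous_intros linear_continuous_on matrix_vector_mul_bounded_linear)
  then have "compact (?q ` sphere 0 1)"
    by (intro compact_continuous_image) auto
  then have "bdd_below (?q ` {\<phi>. norm \<phi> = 1})"
    by (simp add: bounded_imp_bdd_below compact_imp_bounded sphere_def dist_norm)
  then show ?thesis
    unfolding lmin_def using assms by (intro cInf_lower) auto
qed

lemma quadratic_form_ge_lmin: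
  fixes V J :: "real^'p^'p"
  assumes "l \<le> lmin V J"
  shows "l * (norm \<phi>)^2 \<le> \<phi> \<bullet> ((matrix_inv V ** J ** matrix_inv V) *v \<phi>)"
proof (cases "\<phi> = 0")
  case False
  let ?B = "matrix_inv V ** J ** matrix_inv V"
  have "l \<le> (\<phi> /\<^sub>R norm \<phi>) \<bullet> (?B *v (\<phi> /\<^sub>R norm \<phi>))"
    using assms lmin_le_quadratic_form[of "\<phi> /\<^sub>R norm \<phi>" V J] False by simp
  also have "\<dots> = (\<phi> \<bullet> (?B *v \<phi>)) / (norm \<phi>)^2"
    by (simp add: matrix_vector_mult_scaleR power2_eq_square field_simps)
  finally show ?thesis
    using False by (simp add: field_simps)
qed simp

lemma abs_entry_le_maxnorm: "\<bar>A $ i $ j\<bar> \<le> maxnorm (A::real^'n^'m)"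
  unfolding maxnorm_def by (rule Max_ge) auto

lemma abs_quadratic_form_le_maxnorm:
  fixes D :: "real^'p^'p"
  shows "\<bar>\<phi> \<bullet> (D *v \<phi>)\<bar> \<le> real CARD('p)^2 * maxnorm D * (norm \<phi>)^2"
proof -
  have entry: "\<bar>\<phi>$i * D$i$j * \<phi>$j\<bar> \<le> maxnorm D * (norm \<phi>)^2" for i j
  proof -
    have "\<bar>\<phi>$i * D$i$j * \<phi>$j\<bar> = \<bar>D$i$j\<bar> * (\<bar>\<phi>$i\<bar> * \<bar>\<phi>$j\<bar>)"
      by (simp add: abs_mult)
    also have "\<dots> \<le> maxnorm D * (norm \<phi> * norm \<phi>)"
      by (intro mult_mono abs_entry_le_maxnorm component_le_norm_cart)
        (auto intro: order_trans[OF abs_ge_zero abs_entry_le_maxnorm])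
    finally show ?thesis by (simp add: power2_eq_square)
  qed
  have "\<phi> \<bullet> (D *v \<phi>) = (\<Sum>i\<in>UNIV. \<Sum>j\<in>UNIV. \<phi>$i * D$i$j * \<phi>$j)"
    by (simp add: inner_vec_def matrix_vector_mult_def sum_distrib_left mult.assoc)
  also have "\<bar>\<dots>\<bar> \<le> (\<Sum>i\<in>(UNIV::'p set). \<Sum>j\<in>(UNIV::'p set). maxnorm D * (norm \<phi>)^2)"
    by (intro order_trans[OF sum_abs sum_mono] entry)
  also have "\<dots> = real CARD('p)^2 * maxnorm D * (norm \<phi>)^2"
    by (simp add: power2_eq_square)
  finally show ?thesis .
qed

lemma maxnorm_le_gam:
  fixes V :: "real^'p^'p"
  assumes "norm (V *v (\<theta> - \<theta>s)) \<le> d"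
  shows "ereal (maxnorm (matrix_inv V ** (J \<theta> - J \<theta>s) ** matrix_inv V)) \<le> gam V J \<theta>s d"
  unfolding gam_def by (rule SUP_upper2[where i=\<theta>]) (use assms in simp_all)

lemma standardized_score_inner_le:
  fixes U :: "real^'p \<Rightarrow> real^'p" and Jf :: "real^'p \<Rightarrow> real^'p^'p"
  assumes der: "\<And>\<theta>. (U has_derivative (\<lambda>h. - (Jf \<theta> *v h))) (at \<theta>)"
    and inv: "invertible V"
    and lmin: "l \<le> lmin V (Jf \<theta>s)"
    and gam: "gam V Jf \<theta>s r \<le> ereal \<eta>" and eta: "real CARD('p)^2 * \<eta> \<le> l / 2"
    and \<phi>: "norm \<phi> \<le> r"
  shows "\<phi> \<bullet> (matrix_inv V *v U (\<theta>s + matrix_inv V *v \<phi>))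
    \<le> norm \<phi> * norm (matrix_inv V *v U \<theta>s) - l / 2 * (norm \<phi>)^2"
proof -
  define W where "W = matrix_inv V"
  define g where "g \<phi> = W *v U (\<theta>s + W *v \<phi>)" for \<phi>
  define B where "B \<phi> = W ** Jf (\<theta>s + W *v \<phi>) ** W" for \<phi>
  have "(g has_derivative (\<lambda>h. - (B \<phi> *v h))) (at \<phi>)" for \<phi>
    unfolding g_def B_def by (rule has_derivative_standardized[OF der])
  then obtain \<xi> where \<xi>: "\<xi> \<in> {0<..<1}" "\<phi> \<bullet> g \<phi> - \<phi> \<bullet> g 0 = - (\<phi> \<bullet> (B (\<xi> *\<^sub>R \<phi>) *v \<phi>))"
    by (rule inner_radial_mean_value) simp
  define D where "D = W ** (Jf (\<theta>s + W *v (\<xi> *\<^sub>R \<phi>)) - Jf \<theta>s) ** W"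
  have "B (\<xi> *\<^sub>R \<phi>) *v \<phi> = B 0 *v \<phi> + D *v \<phi>"
    by (simp add: B_def D_def matrix_vector_mul_assoc[symmetric]
        matrix_vector_mult_diff_rdistrib matrix_vector_mult_diff_distrib)
  then have split: "\<phi> \<bullet> g \<phi> = \<phi> \<bullet> g 0 - \<phi> \<bullet> (B 0 *v \<phi>) - \<phi> \<bullet> (D *v \<phi>)"
    using \<xi>(2) by (simp add: inner_add_right)
  have "l * (norm \<phi>)^2 \<le> \<phi> \<bullet> (B 0 *v \<phi>)"
    using quadratic_form_ge_lmin[OF lmin] by (simp add: B_def W_def)
  moreover have "\<bar>\<phi> \<bullet> (D *v \<phi>)\<bar> \<le> l / 2 * (norm \<phi>)^2"
  proof -
    have "norm (V *v (\<theta>s + W *v (\<xi> *\<^sub>R \<phi>) - \<theta>s)) \<le> r"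
      using \<xi>(1) \<phi> mult_left_le_one_le[of "norm \<phi>" \<xi>]
      by (simp add: W_def matrix_vector_mul_matrix_inv[OF inv])
    from maxnorm_le_gam[OF this] gam have "maxnorm D \<le> \<eta>"
      unfolding D_def W_def by (metis order_trans ereal_less_eq(3))
    then have "real CARD('p)^2 * maxnorm D \<le> real CARD('p)^2 * \<eta>"
      by (rule mult_left_mono) simp
    with eta have "real CARD('p)^2 * maxnorm D \<le> l / 2"
      by linarith
    then have "real CARD('p)^2 * maxnorm D * (norm \<phi>)^2 \<le> l / 2 * (norm \<phi>)^2"
      by (rule mult_right_mono) simp
    with abs_quadratic_form_le_maxnorm[of \<phi> D] show ?thesis by linarith
  qed
  moreover have "\<phi> \<bullet> g 0 \<le> norm \<phi> * norm (W *v U \<theta>s)"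
    using norm_cauchy_schwarz by (simp add: g_def)
  ultimately show ?thesis
    using split by (simp add: g_def W_def abs_le_iff)
qed

lemma estimating_equation_has_root:
  fixes U :: "real^'p \<Rightarrow> real^'p" and Jf :: "real^'p \<Rightarrow> real^'p^'p"
  assumes der: "\<And>\<theta>. (U has_derivative (\<lambda>h. - (Jf \<theta> *v h))) (at \<theta>)"
    and inv: "invertible V"
    and l: "0 < l" and lmin: "l \<le> lmin V (Jf \<theta>s)"
    and gam: "gam V Jf \<theta>s r \<le> ereal \<eta>" and eta: "real CARD('p)^2 * \<eta> \<le> l / 2"
    and score: "norm (matrix_inv V *v U \<theta>s) \<le> d" and r: "d < l * r / 2"
  shows "\<exists>\<theta>. U \<theta> = 0 \<and> norm (V *v (\<theta> - \<theta>s)) \<le> r"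
proof -
  define g where "g \<phi> = matrix_inv V *v U (\<theta>s + matrix_inv V *v \<phi>)" for \<phi>
  have "0 < l * r"
    using r score norm_ge_zero[of "matrix_inv V *v U \<theta>s"] by linarith
  with l have "r > 0"
    by (simp add: zero_less_mult_iff)
  have "continuous_on (cball 0 r) g"
    using has_derivative_standardized[OF der] unfolding g_def
    by (meson continuous_at_imp_continuous_on has_derivative_continuous)
  moreover have "\<phi> \<bullet> g \<phi> < 0" if "norm \<phi> = r" for \<phi>
  proof -
    have "\<phi> \<bullet> g \<phi> \<le> r * norm (matrix_inv V *v U \<theta>s) - l / 2 * r^2"
      using standardized_score_inner_le[OF der inv lmin gam eta, of \<phi>] that by (simp add: g_def)
    also have "\<dots> \<le> r * d - l / 2 * r^2"
      using score \<open>r > 0\<close> by (simp add: mult_left_mono)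
    also have "\<dots> < 0"
      using mult_strict_left_mono[OF r \<open>r > 0\<close>] by (simp add: power2_eq_square mult.left_commute)
    finally show ?thesis .
  qed
  ultimately obtain \<phi> where "\<phi> \<in> cball 0 r" "g \<phi> = 0"
    using inward_field_has_zero_in_cball \<open>r > 0\<close> by blast
  show ?thesis
  proof (intro exI conjI)
    have "U (\<theta>s + matrix_inv V *v \<phi>) = V *v g \<phi>"
      by (simp add: g_def matrix_vector_mul_matrix_inv[OF inv])
    then show "U (\<theta>s + matrix_inv V *v \<phi>) = 0"
      using \<open>g \<phi> = 0\<close> by simp
    show "norm (V *v (\<theta>s + matrix_inv V *v \<phi> - \<theta>s)) \<le> r"
      using \<open>\<phi> \<in> cball 0 r\<close> by (simp add: matrix_vector_mul_matrix_inv[OF inv])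
  qed
qed

lemma borel_measurable_norm_matrix_vector_mult:
  fixes A :: "real^'n^'m"
  assumes "f \<in> borel_measurable M"
  shows "(\<lambda>\<omega>. norm (A *v f \<omega>)) \<in> borel_measurable M"
proof -
  have "(\<lambda>x. norm (A *v x)) \<in> borel_measurable borel"
    by (intro borel_measurable_continuous_onI continuous_intros linear_continuous_on
        matrix_vector_mul_bounded_linear)
  from measurable_compose[OF assms this] show ?thesis
    by (simp add: o_def)
qed

lemma (in prob_space) prob_compl_union3_ge:
  assumes "A \<in> events" "B \<in> events" "C \<in> events"
  shows "1 - prob A - prob B - prob C \<le> prob (space M - (A \<union> B \<union> C))"
proof -
  have "prob (A \<union> B \<union> C) \<le> prob (A \<union> B) + prob C"
    using assms by (intro measure_subadditive) (auto simp: emeasure_eq_measure)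
  also have "prob (A \<union> B) \<le> prob A + prob B"
    using assms by (intro measure_subadditive) (auto simp: emeasure_eq_measure)
  finally show ?thesis
    using assms by (simp add: prob_compl)
qed

lemma (in prob_space) eventually_likely_event:
  assumes events: "\<And>n. A n \<in> events" "\<And>n. B n \<in> events" "\<And>n. C n \<in> events"
    and A: "(\<lambda>n. prob (A n)) \<longlonglongrightarrow> 0" and B: "(\<lambda>n. prob (B n)) \<longlonglongrightarrow> 0"
    and C: "eventually (\<lambda>n. prob (C n) \<le> \<epsilon> / 2) sequentially" and \<epsilon>: "\<epsilon> > 0"
    and G: "\<And>n. space M - (A n \<union> B n \<union> C n) \<subseteq> G n"
  shows "eventually (\<lambda>n. \<exists>E\<in>events. E \<subseteq> G n \<and> 1 - \<epsilon> < prob E) sequentially"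
proof -
  have quarter: "\<epsilon> / 4 > 0" using \<epsilon> by simp
  from order_tendstoD(2)[OF A quarter] order_tendstoD(2)[OF B quarter] C
  show ?thesis
  proof eventually_elim
    case (elim n)
    then have "1 - \<epsilon> < 1 - prob (A n) - prob (B n) - prob (C n)"
      by linarith
    also have "\<dots> \<le> prob (space M - (A n \<union> B n \<union> C n))"
      by (intro prob_compl_union3_ge events)
    finally have "1 - \<epsilon> < prob (space M - (A n \<union> B n \<union> C n))" .
    moreover have "space M - (A n \<union> B n \<union> C n) \<in> events"
      using events by blast
    ultimately show ?case
      using G by blast
  qed
qed

theorem theoremE1:
  fixes M :: "'a measure"
    and u :: "nat \<Rightarrow> 'a \<Rightarrow> real^'p \<Rightarrow> real^'p"
    and J :: "nat \<Rightarrow> 'a \<Rightarrow> real^'p \<Rightarrow> real^'p^'p"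
    and V :: "nat \<Rightarrow> real^'p^'p"
    and \<theta>s :: "nat \<Rightarrow> real^'p"
  assumes prob: "prob_space M"
    and deriv: "\<And>n \<omega> \<theta>. \<omega> \<in> space M \<Longrightarrow>
        (u n \<omega> has_derivative (\<lambda>h. - (J n \<omega> \<theta> *v h))) (at \<theta>)"
    and V_inv: "\<And>n. invertible (V n)"
    and V_sym: "\<And>n. transpose (V n) = V n"
    and meas_u: "\<And>n. (\<lambda>\<omega>. u n \<omega> (\<theta>s n)) \<in> borel_measurable M"
    and meas_l: "\<And>n c. {\<omega>\<in>space M. lmin (V n) (J n \<omega> (\<theta>s n)) < c} \<in> sets M"
    and meas_g: "\<And>n d c. {\<omega>\<in>space M. gam (V n) (J n \<omega>) (\<theta>s n) d > ereal c} \<in> sets M"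
    and G1: "(\<lambda>n. opnorm (matrix_inv (V n))) \<longlonglongrightarrow> 0"
    and G2: "\<exists>l>0. (\<lambda>n. measure M {\<omega>\<in>space M. lmin (V n) (J n \<omega> (\<theta>s n)) < l}) \<longlonglongrightarrow> 0"
    and G3: "\<And>d \<eta>. d > 0 \<Longrightarrow> \<eta> > 0 \<Longrightarrow>
        (\<lambda>n. measure M {\<omega>\<in>space M. gam (V n) (J n \<omega>) (\<theta>s n) d > ereal \<eta>}) \<longlonglongrightarrow> 0"
    and G4: "\<And>\<epsilon>. \<epsilon> > 0 \<Longrightarrow> \<exists>d. eventually (\<lambda>n.
        measure M {\<omega>\<in>space M. norm (matrix_inv (V n) *v u n \<omega> (\<theta>s n)) > d} \<le> \<epsilon>) sequentially"
  shows "\<forall>\<epsilon>>0. \<exists>d>0. eventually (\<lambda>n. \<exists>A\<in>sets M.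
        A \<subseteq> {\<omega>\<in>space M. \<exists>\<theta>. u n \<omega> \<theta> = 0 \<and> norm (V n *v (\<theta> - \<theta>s n)) < d}
        \<and> measure M A > 1 - \<epsilon>) sequentially"
proof (intro allI impI)
  fix \<epsilon> :: real assume \<epsilon>: "\<epsilon> > 0"
  interpret prob_space M by (rule prob)
  obtain l where l: "l > 0"
    and small_lmin: "(\<lambda>n. prob {\<omega>\<in>space M. lmin (V n) (J n \<omega> (\<theta>s n)) < l}) \<longlonglongrightarrow> 0"
    using G2 by blast
  obtain d where small_score: "eventually (\<lambda>n.
      prob {\<omega>\<in>space M. norm (matrix_inv (V n) *v u n \<omega> (\<theta>s n)) > d} \<le> \<epsilon> / 2) sequentially"
    using G4[of "\<epsilon> / 2"] \<epsilon> by auto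
  define r where "r = 2 * (\<bar>d\<bar> + 1) / l"
  define \<eta> where "\<eta> = l / (2 * real CARD('p)^2)"
  have r: "r > 0" "d < l * r / 2" and \<eta>: "\<eta> > 0" "real CARD('p)^2 * \<eta> \<le> l / 2"
    using l by (auto simp: r_def \<eta>_def)
  define low_info where "low_info n = {\<omega>\<in>space M. lmin (V n) (J n \<omega> (\<theta>s n)) < l}" for n
  define wide_var where "wide_var n = {\<omega>\<in>space M. gam (V n) (J n \<omega>) (\<theta>s n) r > ereal \<eta>}" for n
  define large_score where
    "large_score n = {\<omega>\<in>space M. norm (matrix_inv (V n) *v u n \<omega> (\<theta>s n)) > d}" for n
  have events: "low_info n \<in> events" "wide_var n \<in> events" "large_score n \<in> events" for n
    unfolding low_info_def wide_var_def large_score_def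
    by (simp_all add: meas_l meas_g borel_measurable_less[OF borel_measurable_const
          borel_measurable_norm_matrix_vector_mult[OF meas_u]])
  have roots: "space M - (low_info n \<union> wide_var n \<union> large_score n) \<subseteq>
      {\<omega>\<in>space M. \<exists>\<theta>. u n \<omega> \<theta> = 0 \<and> norm (V n *v (\<theta> - \<theta>s n)) < r + 1}" for n
  proof
    fix \<omega> assume "\<omega> \<in> space M - (low_info n \<union> wide_var n \<union> large_score n)"
    then have \<omega>: "\<omega> \<in> space M" "l \<le> lmin (V n) (J n \<omega> (\<theta>s n))"
      "gam (V n) (J n \<omega>) (\<theta>s n) r \<le> ereal \<eta>" "norm (matrix_inv (V n) *v u n \<omega> (\<theta>s n)) \<le> d"
      by (auto simp: low_info_def wide_var_def large_score_def not_less)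
    from estimating_equation_has_root[OF deriv[OF \<omega>(1)] V_inv l \<omega>(2,3) \<eta>(2) \<omega>(4) r(2)] \<omega>(1)
    show "\<omega> \<in> {\<omega>\<in>space M. \<exists>\<theta>. u n \<omega> \<theta> = 0 \<and> norm (V n *v (\<theta> - \<theta>s n)) < r + 1}"
      by force
  qed
  have "eventually (\<lambda>n. \<exists>A\<in>events.
      A \<subseteq> {\<omega>\<in>space M. \<exists>\<theta>. u n \<omega> \<theta> = 0 \<and> norm (V n *v (\<theta> - \<theta>s n)) < r + 1}
      \<and> 1 - \<epsilon> < prob A) sequentially"
    by (rule eventually_likely_event[OF events small_lmin[folded low_info_def]
          G3[OF r(1) \<eta>(1), folded wide_var_def] small_score[folded large_score_def] \<epsilon> roots])
  then show "\<exists>d>0. eventually (\<lambda>n. \<exists>A\<in>sets M.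
        A \<subseteq> {\<omega>\<in>space M. \<exists>\<theta>. u n \<omega> \<theta> = 0 \<and> norm (V n *v (\<theta> - \<theta>s n)) < d}
        \<and> measure M A > 1 - \<epsilon>) sequentially"
    using r(1) by (intro exI[of _ "r + 1"]) simp
qed

end
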